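(* Let $X=\{1,\dots,n\}$, $Y$ finite, $Q$ a symmetric irreducible stochastic matrix on $Y$ (notation in context). Let $\underline a=(a_0,\dots,a_m)$ be a type with $a_0+\cdots+a_m=h$, and let $k$ be an integer with $\ell(\underline a)\le k\le\frac{n+\ell(\underline a)}{2}$ and $k\le h\le n+\ell(\underline a)-k$. Write $\underline a^{(r)}=(a_0-r,a_1,\dots,a_m)$. Then for every $F\in P_{k,\underline a^{(h-k)},k}$, $$\big\|D^*_{h,\underline a}D^*_{h-1,\underline a^{(1)}}\cdots D^*_{k+1,\underline a^{(h-k-1)}}F\big\|^2=\frac{(n+\ell(\underline a)-2k)!\,(h-k)!}{(n+\ell(\underline a)-k-h)!}\,|Y|^{h-k}\,\|F\|^2 .$$ In particular $D^*_{h,\underline a}D^*_{h-1,\underline a^{(1)}}\cdots D^*_{k+1,\underline a^{(h-k-1)}}$ is an isomorphism of $P_{k,\underline a^{(h-k)},k}$ onto $P_{h,\underline a,k}$.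
   Context: $Q$ acts on $L(Y)$ by $(Qf)(y)=\sum_{y'}q(y,y')f(y')$, with distinct eigenvalues $\lambda_0=1,\dots,\lambda_m$ and eigenspaces $W_0$ (constants), $W_1,\dots,W_m$. For $0\le k\le n$, $\Theta_k$ is the set of functions $\theta$ with $\mathrm{dom}(\theta)$ a $k$-subset of $X$ and values in $Y$ ($\Theta_0$ = empty function), with inner product $\langle F,G\rangle=\sum_{\theta\in\Theta_k}F(\theta)\overline{G(\theta)}$ on $L(\Theta_k)$ and norm $\|F\|^2=\langle F,F\rangle$; $\varphi\subseteq\theta$ means $\mathrm{dom}\varphi\subseteq\mathrm{dom}\theta$ and $\theta|_{\mathrm{dom}\varphi}=\varphi$. For $1\le k\le n$: $(D_kF)(\varphi)=\sum_{\theta\in\Theta_k:\theta\supseteq\varphi}F(\theta)$ and $(D_k^*F)(\theta)=\sum_{\varphi\in\Theta_{k-1}:\varphi\subseteq\theta}F(\varphi)$; $D_0:=0$. Types $\underline c=(c_0,\dots,c_m)$, $|\underline c|=\sum c_i$, $\ell(\underline c)=c_1+\cdots+c_m$, $\underline c'=(c_0-1,c_1,\dots,c_m)$. A fundamental function of type $\underline c$ on $A$, $|A|=|\underline c|$, is $F=\bigotimes_{j\in A}F^j$ ($F(\theta)=\prod_{j\in A}F^j(\theta(j))$ on $Y^A$, $0$ elsewhere) with each $F^j$ in some $W_{i_j}$ and exactly $c_i$ indices with $i_j=i$; $P_{k,\underline c,A}$ is their span, $P_{k,\underline c}=\bigoplus_{|A|=k}P_{k,\underline c,A}$. $D_{k,\underline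 c}=D_k|_{P_{k,\underline c}}$, $D^*_{k,\underline c}=D^*_k|_{P_{k-1,\underline c'}}$. For $|\underline c|=k$: $P_{k,\underline c,k}=\ker D_{k,\underline c}$; for $k<h\le n$, $|\underline c|=h$, $\ell(\underline c)\le k$: $P_{h,\underline c,k}=D^*_{h,\underline c}(P_{h-1,\underline c',k})$. For $h=k$ the composition of the $D^*$'s is the identity. *)

theory Defs
  imports Complex_Main
begin

text \<open>Setting: X = {1..n}, Y = the finite type 'y, Q given by q :: 'y => 'y => real.
Functions in L(Y), L(Theta_k) are complex valued.\<close>

definition stochastic_sym_irred :: "('y::finite \<Rightarrow> 'y \<Rightarrow> real) \<Rightarrow> bool" where
  "stochastic_sym_irred q \<longleftrightarrow>
     (\<forall>y y'. q y y' \<ge> 0) \<and> (\<forall>y. (\<Sum>y'\<in>UNIV. q y y') = 1) \<and>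
     (\<forall>y y'. q y y' = q y' y) \<and>
     (\<forall>y y'. (y, y') \<in> {(u, v). q u v > 0}\<^sup>*)"

definition Qop :: "('y::finite \<Rightarrow> 'y \<Rightarrow> real) \<Rightarrow> ('y \<Rightarrow> complex) \<Rightarrow> 'y \<Rightarrow> complex" where
  "Qop q f = (\<lambda>y. \<Sum>y'\<in>UNIV. complex_of_real (q y y') * f y')"

definition eigen_enum :: "('y::finite \<Rightarrow> 'y \<Rightarrow> real) \<Rightarrow> nat \<Rightarrow> (nat \<Rightarrow> real) \<Rightarrow> bool" where
  "eigen_enum q m lam \<longleftrightarrow> lam 0 = 1 \<and> inj_on lam {..m} \<and>
     (\<forall>\<mu>::complex. (\<exists>f. f \<noteq> (\<lambda>_. 0) \<and> Qop q f = (\<lambda>y. \<mu> * f y))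
                    \<longleftrightarrow> \<mu> \<in> complex_of_real ` lam ` {..m})"

definition W :: "('y::finite \<Rightarrow> 'y \<Rightarrow> real) \<Rightarrow> (nat \<Rightarrow> real) \<Rightarrow> nat \<Rightarrow> ('y \<Rightarrow> complex) set" where
  "W q lam i = {f. Qop q f = (\<lambda>y. complex_of_real (lam i) * f y)}"

definition Theta :: "nat \<Rightarrow> nat \<Rightarrow> (nat \<rightharpoonup> 'y::finite) set" where
  "Theta n k = {\<theta>. dom \<theta> \<subseteq> {1..n} \<and> card (dom \<theta>) = k}"

definition normsq :: "nat \<Rightarrow> nat \<Rightarrow> ((nat \<rightharpoonup> 'y::finite) \<Rightarrow> complex) \<Rightarrow> real" where
  "normsq n k F = (\<Sum>\<theta>\<in>Theta n k. (cmod (F \<theta>))\<^sup>2)"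

definition Dop :: "nat \<Rightarrow> nat \<Rightarrow> ((nat \<rightharpoonup> 'y::finite) \<Rightarrow> complex) \<Rightarrow> (nat \<rightharpoonup> 'y) \<Rightarrow> complex" where
  "Dop n k F = (\<lambda>\<phi>. if k = 0 then 0 else if \<phi> \<in> Theta n (k - 1)
       then (\<Sum>\<theta>\<in>{\<theta>\<in>Theta n k. \<phi> \<subseteq>\<^sub>m \<theta>}. F \<theta>) else 0)"

definition Dstar :: "nat \<Rightarrow> nat \<Rightarrow> ((nat \<rightharpoonup> 'y::finite) \<Rightarrow> complex) \<Rightarrow> (nat \<rightharpoonup> 'y) \<Rightarrow> complex" where
  "Dstar n k F = (\<lambda>\<theta>. if \<theta> \<in> Theta n k
       then (\<Sum>\<phi>\<in>{\<phi>\<in>Theta n (k - 1). \<phi> \<subseteq>\<^sub>m \<theta>}. F \<phi>) else 0)"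

definition cspan :: "('a \<Rightarrow> complex) set \<Rightarrow> ('a \<Rightarrow> complex) set" where
  "cspan S = {F. \<exists>T u. finite T \<and> T \<subseteq> S \<and> F = (\<lambda>x. \<Sum>G\<in>T. u G * G x)}"

text \<open>Types are c :: nat => nat, only the entries c 0, ..., c m matter.\<close>
definition type_size :: "nat \<Rightarrow> (nat \<Rightarrow> nat) \<Rightarrow> nat" where
  "type_size m c = (\<Sum>i\<le>m. c i)"

definition type_ell :: "nat \<Rightarrow> (nat \<Rightarrow> nat) \<Rightarrow> nat" where
  "type_ell m c = (\<Sum>i=1..m. c i)"

definition type_shift :: "nat \<Rightarrow> (nat \<Rightarrow> nat) \<Rightarrow> nat \<Rightarrow> nat" where
  "type_shift r c = c(0 := c 0 - r)"

definition fundamental ::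
  "('y::finite \<Rightarrow> 'y \<Rightarrow> real) \<Rightarrow> nat \<Rightarrow> (nat \<Rightarrow> real) \<Rightarrow> (nat \<Rightarrow> nat) \<Rightarrow> nat set
    \<Rightarrow> ((nat \<rightharpoonup> 'y) \<Rightarrow> complex) \<Rightarrow> bool" where
  "fundamental q m lam c A F \<longleftrightarrow>
     (\<exists>Fj :: nat \<Rightarrow> 'y \<Rightarrow> complex. \<exists>ii :: nat \<Rightarrow> nat.
        (\<forall>j\<in>A. ii j \<le> m \<and> Fj j \<in> W q lam (ii j)) \<and>
        (\<forall>i\<le>m. card {j\<in>A. ii j = i} = c i) \<and>
        F = (\<lambda>\<theta>. if dom \<theta> = A then (\<Prod>j\<in>A. Fj j (the (\<theta> j))) else 0))"

definition Pkc ::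
  "('y::finite \<Rightarrow> 'y \<Rightarrow> real) \<Rightarrow> nat \<Rightarrow> (nat \<Rightarrow> real) \<Rightarrow> nat \<Rightarrow> nat \<Rightarrow> (nat \<Rightarrow> nat)
    \<Rightarrow> ((nat \<rightharpoonup> 'y) \<Rightarrow> complex) set" where
  "Pkc q m lam n k c = cspan (\<Union>A\<in>{A. A \<subseteq> {1..n} \<and> card A = k}. {F. fundamental q m lam c A F})"

text \<open>PP d c k = P_{k+d, c, k}.\<close>
fun PP ::
  "('y::finite \<Rightarrow> 'y \<Rightarrow> real) \<Rightarrow> nat \<Rightarrow> (nat \<Rightarrow> real) \<Rightarrow> nat \<Rightarrow> nat \<Rightarrow> (nat \<Rightarrow> nat) \<Rightarrow> nat
    \<Rightarrow> ((nat \<rightharpoonup> 'y) \<Rightarrow> complex) set" where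
  "PP q m lam n 0 c k = {F \<in> Pkc q m lam n k c. Dop n k F = (\<lambda>_. 0)}"
| "PP q m lam n (Suc d) c k = Dstar n (k + Suc d) ` PP q m lam n d (type_shift 1 c) k"

definition Pspace where
  "Pspace q m lam n h c k = PP q m lam n (h - k) c k"

fun DstarIter :: "nat \<Rightarrow> nat \<Rightarrow> nat \<Rightarrow> ((nat \<rightharpoonup> 'y::finite) \<Rightarrow> complex) \<Rightarrow> (nat \<rightharpoonup> 'y) \<Rightarrow> complex" where
  "DstarIter n k 0 F = F"
| "DstarIter n k (Suc d) F = Dstar n (k + Suc d) (DstarIter n k d F)"

end

theory Submission
  imports Defs
begin

text \<open>The key operator is R = resample_sum: (R G)(\<psi>) sums G over all functions obtained from \<psi>
  by reassigning the value at one point of its domain.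
  Counting the ways of adding and removing one coordinate gives the commutation relations
  D(j+1) D*(j+1) + R = D*(j) D(j) + (n - j)|Y| and R D* = D* (R + |Y|).
  On P(k,c) the operator R is multiplication by c(0)|Y|, so for F with D(k) F = 0 induction shows
  that D* D acts on the d-th iterate of D* applied to F as the scalar d (n - k - c(0) - d + 1) |Y|.
  As D* is adjoint to D, each further application of D* multiplies the squared norm by the next
  such scalar. Their product is the stated factorial expression; it is positive, so the iterate
  is also injective.\<close>

section \<open>The sets Theta\<close>

lemma finite_Theta: "finite (Theta n k :: (nat \<rightharpoonup> 'y::finite) set)"
proof (rule finite_subset)
  show "Theta n k \<subseteq> (\<Union>A\<in>Pow {1..n}. {\<theta> :: nat \<rightharpoonup> 'y. dom \<theta> = A \<and> ran \<theta> \<subseteq> UNIV})"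
    by (auto simp: Theta_def)
  show "finite (\<Union>A\<in>Pow {1..n}. {\<theta> :: nat \<rightharpoonup> 'y. dom \<theta> = A \<and> ran \<theta> \<subseteq> UNIV})"
    by (intro finite_UN_I finite_set_of_finite_maps) (auto intro: finite_subset)
qed

lemma finite_dom_Theta: "\<theta> \<in> Theta n k \<Longrightarrow> finite (dom \<theta>)"
  by (auto simp: Theta_def intro: finite_subset)

lemma Theta_le: "\<theta> \<in> Theta n k \<Longrightarrow> k \<le> n"
  unfolding Theta_def using card_mono[of "{1..n}"] by fastforce

lemma Theta_remove: "\<theta> \<in> Theta n (Suc j) \<Longrightarrow> z \<in> dom \<theta> \<Longrightarrow> \<theta>(z := None) \<in> Theta n j"
  using finite_dom_Theta[of \<theta>] by (auto simp: Theta_def)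

lemma Theta_extend: "\<psi> \<in> Theta n j \<Longrightarrow> x \<in> {1..n} - dom \<psi> \<Longrightarrow> \<psi>(x \<mapsto> y) \<in> Theta n (Suc j)"
  using finite_dom_Theta[of \<psi> n j] by (auto simp: Theta_def)

lemma Theta_update: "\<psi> \<in> Theta n j \<Longrightarrow> x \<in> dom \<psi> \<Longrightarrow> \<psi>(x \<mapsto> y) \<in> Theta n j"
  by (auto simp: Theta_def insert_absorb)

lemma map_le_card_SucE:
  assumes "\<phi> \<subseteq>\<^sub>m \<theta>" "finite (dom \<theta>)" "card (dom \<theta>) = Suc (card (dom \<phi>))"
  obtains z y where "z \<notin> dom \<phi>" "\<theta> = \<phi>(z \<mapsto> y)"
proof -
  have sub: "dom \<phi> \<subseteq> dom \<theta>"
    using assms(1) by (rule map_le_implies_dom_le)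
  have "card (dom \<theta> - dom \<phi>) = 1"
    using assms(2,3) sub by (simp add: card_Diff_subset finite_subset)
  then obtain z where z: "dom \<theta> - dom \<phi> = {z}"
    by (auto simp: card_1_singleton_iff)
  have "\<theta> = \<phi>(z \<mapsto> the (\<theta> z))"
  proof
    fix x
    show "\<theta> x = (\<phi>(z \<mapsto> the (\<theta> z))) x"
    proof (cases "x = z")
      case True
      have "z \<in> dom \<theta>"
        using z by blast
      with True show ?thesis by auto
    next
      case False
      with z assms(1) show ?thesis
        by (cases "x \<in> dom \<phi>") (auto simp: map_le_def)
    qed
  qed
  with z that show thesis by blast
qed

lemma bij_betw_remove_Theta:
  assumes "\<theta> \<in> Theta n (Suc j)"
  shows "bij_betw (\<lambda>z. \<theta>(z := None)) (dom \<theta>) {\<phi> \<in> Theta n j. \<phi> \<subseteq>\<^sub>m \<theta>}"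
proof (rule bij_betw_imageI)
  show "inj_on (\<lambda>z. \<theta>(z := None)) (dom \<theta>)"
    by (rule inj_onI) (metis domIff fun_upd_same fun_upd_other)
  show "(\<lambda>z. \<theta>(z := None)) ` dom \<theta> = {\<phi> \<in> Theta n j. \<phi> \<subseteq>\<^sub>m \<theta>}"
  proof (intro equalityI subsetI)
    fix \<phi> assume "\<phi> \<in> (\<lambda>z. \<theta>(z := None)) ` dom \<theta>"
    then show "\<phi> \<in> {\<phi> \<in> Theta n j. \<phi> \<subseteq>\<^sub>m \<theta>}"
      using Theta_remove[OF assms] by (auto simp: map_le_def split: if_splits)
  next
    fix \<phi> assume "\<phi> \<in> {\<phi> \<in> Theta n j. \<phi> \<subseteq>\<^sub>m \<theta>}"
    then have "\<phi> \<subseteq>\<^sub>m \<theta>" "card (dom \<theta>) = Suc (card (dom \<phi>))"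
      using assms by (auto simp: Theta_def)
    then obtain z y where "z \<notin> dom \<phi>" "\<theta> = \<phi>(z \<mapsto> y)"
      using map_le_card_SucE finite_dom_Theta[OF assms] by metis
    then show "\<phi> \<in> (\<lambda>z. \<theta>(z := None)) ` dom \<theta>"
      by (intro image_eqI[of _ _ z]) (auto simp: domIff)
  qed
qed

lemma bij_betw_extend_Theta:
  assumes "\<phi> \<in> Theta n j"
  shows "bij_betw (\<lambda>(x, y). \<phi>(x \<mapsto> y)) (({1..n} - dom \<phi>) \<times> UNIV)
           {\<theta> \<in> Theta n (Suc j). \<phi> \<subseteq>\<^sub>m \<theta>}"
proof (rule bij_betw_imageI)
  show "inj_on (\<lambda>(x, y). \<phi>(x \<mapsto> y)) (({1..n} - dom \<phi>) \<times> UNIV)"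
    by (rule inj_onI) (auto simp: domIff fun_eq_iff split: if_splits)
  show "(\<lambda>(x, y). \<phi>(x \<mapsto> y)) ` (({1..n} - dom \<phi>) \<times> UNIV) = {\<theta> \<in> Theta n (Suc j). \<phi> \<subseteq>\<^sub>m \<theta>}"
  proof (intro equalityI subsetI)
    fix \<theta> assume "\<theta> \<in> (\<lambda>(x, y). \<phi>(x \<mapsto> y)) ` (({1..n} - dom \<phi>) \<times> UNIV)"
    then obtain x y where "x \<in> {1..n} - dom \<phi>" "\<theta> = \<phi>(x \<mapsto> y)"
      by (elim imageE SigmaE) auto
    then show "\<theta> \<in> {\<theta> \<in> Theta n (Suc j). \<phi> \<subseteq>\<^sub>m \<theta>}"
      using Theta_extend[OF assms] by (auto simp: map_le_def)
  next
    fix \<theta> assume \<theta>: "\<theta> \<in> {\<theta> \<in> Theta n (Suc j). \<phi> \<subseteq>\<^sub>m \<theta>}"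
    then have "\<phi> \<subseteq>\<^sub>m \<theta>" "card (dom \<theta>) = Suc (card (dom \<phi>))"
      using assms by (auto simp: Theta_def)
    then obtain z y where z: "z \<notin> dom \<phi>" "\<theta> = \<phi>(z \<mapsto> y)"
      using map_le_card_SucE finite_dom_Theta[of \<theta>] \<theta> by blast
    then have "z \<in> {1..n}"
      using \<theta> by (auto simp: Theta_def)
    with z show "\<theta> \<in> (\<lambda>(x, y). \<phi>(x \<mapsto> y)) ` (({1..n} - dom \<phi>) \<times> UNIV)"
      by force
  qed
qed

lemma Dstar_Suc_eq:
  "\<theta> \<in> Theta n (Suc j) \<Longrightarrow> Dstar n (Suc j) G \<theta> = (\<Sum>z\<in>dom \<theta>. G (\<theta>(z := None)))"
  using sum.reindex_bij_betw[OF bij_betw_remove_Theta, of \<theta> n j G] by (simp add: Dstar_def)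

lemma Dop_Suc_eq:
  "\<phi> \<in> Theta n j \<Longrightarrow> Dop n (Suc j) G \<phi> = (\<Sum>x\<in>{1..n} - dom \<phi>. \<Sum>y\<in>UNIV. G (\<phi>(x \<mapsto> y)))"
  using sum.reindex_bij_betw[OF bij_betw_extend_Theta, of \<phi> n j G]
  by (simp add: Dop_def sum.cartesian_product split_beta)

section \<open>Commutation relations\<close>

definition resample_sum :: "((nat \<rightharpoonup> 'y::finite) \<Rightarrow> complex) \<Rightarrow> (nat \<rightharpoonup> 'y) \<Rightarrow> complex" where
  "resample_sum G \<psi> = (\<Sum>z\<in>dom \<psi>. \<Sum>y\<in>UNIV. G (\<psi>(z \<mapsto> y)))"

lemma Dstar_Dop_eq:
  assumes "\<psi> \<in> Theta n j"
  shows "Dstar n j (Dop n j G) \<psi> =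
    (\<Sum>z\<in>dom \<psi>. \<Sum>x\<in>{1..n} - (dom \<psi> - {z}). \<Sum>y\<in>UNIV. G ((\<psi>(z := None))(x \<mapsto> y)))"
proof (cases j)
  case 0
  then have "dom \<psi> = {}"
    using assms finite_dom_Theta[OF assms] by (auto simp: Theta_def)
  with 0 show ?thesis by (simp add: Dop_def Dstar_def)
next
  case (Suc i)
  with assms show ?thesis
    by (simp add: Dstar_Suc_eq Dop_Suc_eq Theta_remove)
qed

lemma Dop_Dstar_commute:
  fixes G :: "(nat \<rightharpoonup> 'y::finite) \<Rightarrow> complex"
  assumes \<psi>: "\<psi> \<in> Theta n j"
  shows "Dop n (Suc j) (Dstar n (Suc j) G) \<psi> + resample_sum G \<psi>
       = Dstar n j (Dop n j G) \<psi> + of_nat ((n - j) * card (UNIV :: 'y set)) * G \<psi>"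
proof -
  let ?X = "{1..n} - dom \<psi>"
  have fin: "finite (dom \<psi>)"
    using finite_dom_Theta[OF \<psi>] .
  have sub: "dom \<psi> \<subseteq> {1..n}" and card: "card (dom \<psi>) = j"
    using \<psi> by (auto simp: Theta_def)
  have card_X: "card ?X = n - j"
    using card_Diff_subset[OF fin sub] card by simp
  define T where "T = (\<Sum>x\<in>?X. \<Sum>y\<in>UNIV. \<Sum>z\<in>dom \<psi>. G ((\<psi>(z := None))(x \<mapsto> y)))"
  have "Dop n (Suc j) (Dstar n (Suc j) G) \<psi> = (\<Sum>x\<in>?X. \<Sum>y\<in>UNIV. Dstar n (Suc j) G (\<psi>(x \<mapsto> y)))"
    by (rule Dop_Suc_eq[OF \<psi>])
  also have "\<dots> = (\<Sum>x\<in>?X. \<Sum>y\<in>UNIV. G \<psi> + (\<Sum>z\<in>dom \<psi>. G ((\<psi>(z := None))(x \<mapsto> y))))"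
  proof (intro sum.cong refl)
    fix x y assume x: "x \<in> ?X"
    have "Dstar n (Suc j) G (\<psi>(x \<mapsto> y)) = G ((\<psi>(x \<mapsto> y))(x := None)) + (\<Sum>z\<in>dom \<psi>. G ((\<psi>(x \<mapsto> y))(z := None)))"
      using x fin by (simp add: Dstar_Suc_eq Theta_extend[OF \<psi> x])
    also have "(\<psi>(x \<mapsto> y))(x := None) = \<psi>"
      using x by (auto simp: domIff)
    also have "(\<Sum>z\<in>dom \<psi>. G ((\<psi>(x \<mapsto> y))(z := None))) = (\<Sum>z\<in>dom \<psi>. G ((\<psi>(z := None))(x \<mapsto> y)))"
      using x by (intro sum.cong refl) (metis DiffE fun_upd_twist)
    finally show "Dstar n (Suc j) G (\<psi>(x \<mapsto> y)) = G \<psi> + (\<Sum>z\<in>dom \<psi>. G ((\<psi>(z := None))(x \<mapsto> y)))" .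
  qed
  also have "\<dots> = of_nat (card ?X * card (UNIV :: 'y set)) * G \<psi> + T"
    by (simp add: sum.distrib T_def)
  finally have DDstar: "Dop n (Suc j) (Dstar n (Suc j) G) \<psi> = of_nat ((n - j) * card (UNIV :: 'y set)) * G \<psi> + T"
    unfolding card_X .
  have "Dstar n j (Dop n j G) \<psi> = (\<Sum>z\<in>dom \<psi>. \<Sum>x\<in>insert z ?X. \<Sum>y\<in>UNIV. G ((\<psi>(z := None))(x \<mapsto> y)))"
    unfolding Dstar_Dop_eq[OF \<psi>] using sub by (intro sum.cong refl arg_cong[where f="\<lambda>A. sum _ A"]) auto
  also have "\<dots> = resample_sum G \<psi> + (\<Sum>z\<in>dom \<psi>. \<Sum>x\<in>?X. \<Sum>y\<in>UNIV. G ((\<psi>(z := None))(x \<mapsto> y)))"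
    by (simp add: resample_sum_def sum.distrib)
  also have "(\<Sum>z\<in>dom \<psi>. \<Sum>x\<in>?X. \<Sum>y\<in>UNIV. G ((\<psi>(z := None))(x \<mapsto> y))) = T"
    unfolding T_def by (subst sum.swap) (simp add: sum.swap[of _ "dom \<psi>"])
  finally show ?thesis
    using DDstar by (simp add: algebra_simps)
qed

lemma sum_swap_off_diagonal:
  assumes "finite D"
  shows "(\<Sum>z\<in>D. \<Sum>w\<in>D - {z}. f z w) = (\<Sum>w\<in>D. \<Sum>z\<in>D - {w}. f z w)"
proof -
  have "(\<Sum>z\<in>D. \<Sum>w\<in>D - {z}. f z w) = (\<Sum>z\<in>D. \<Sum>w\<in>{w \<in> D. w \<noteq> z}. f z w)"
    by (intro sum.cong) auto
  also have "\<dots> = (\<Sum>w\<in>D. \<Sum>z\<in>{z \<in> D. w \<noteq> z}. f z w)"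
    using assms by (rule sum.swap_restrict[OF _ assms])
  also have "\<dots> = (\<Sum>w\<in>D. \<Sum>z\<in>D - {w}. f z w)"
    by (intro sum.cong) auto
  finally show ?thesis .
qed

lemma resample_sum_Dstar:
  fixes G :: "(nat \<rightharpoonup> 'y::finite) \<Rightarrow> complex"
  assumes \<theta>: "\<theta> \<in> Theta n (Suc j)"
  shows "resample_sum (Dstar n (Suc j) G) \<theta>
       = of_nat (card (UNIV :: 'y set)) * Dstar n (Suc j) G \<theta> + Dstar n (Suc j) (resample_sum G) \<theta>"
proof -
  have fin: "finite (dom \<theta>)"
    using finite_dom_Theta[OF \<theta>] .
  have "resample_sum (Dstar n (Suc j) G) \<theta> =
     (\<Sum>z\<in>dom \<theta>. \<Sum>y\<in>UNIV. G (\<theta>(z := None)) + (\<Sum>w\<in>dom \<theta> - {z}. G ((\<theta>(w := None))(z \<mapsto> y))))"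
    unfolding resample_sum_def
  proof (intro sum.cong refl)
    fix z y assume z: "z \<in> dom \<theta>"
    have "Dstar n (Suc j) G (\<theta>(z \<mapsto> y)) = (\<Sum>w\<in>dom \<theta>. G ((\<theta>(z \<mapsto> y))(w := None)))"
      using z by (simp add: Dstar_Suc_eq[OF Theta_update[OF \<theta> z]] insert_absorb)
    also have "\<dots> = G (\<theta>(z := None)) + (\<Sum>w\<in>dom \<theta> - {z}. G ((\<theta>(z \<mapsto> y))(w := None)))"
      using fin z by (simp add: sum.remove)
    also have "(\<Sum>w\<in>dom \<theta> - {z}. G ((\<theta>(z \<mapsto> y))(w := None)))
        = (\<Sum>w\<in>dom \<theta> - {z}. G ((\<theta>(w := None))(z \<mapsto> y)))"
      by (intro sum.cong refl) (simp add: fun_upd_twist)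
    finally show "Dstar n (Suc j) G (\<theta>(z \<mapsto> y)) =
        G (\<theta>(z := None)) + (\<Sum>w\<in>dom \<theta> - {z}. G ((\<theta>(w := None))(z \<mapsto> y)))" .
  qed
  also have "\<dots> = of_nat (card (UNIV :: 'y set)) * (\<Sum>z\<in>dom \<theta>. G (\<theta>(z := None)))
      + (\<Sum>z\<in>dom \<theta>. \<Sum>w\<in>dom \<theta> - {z}. \<Sum>y\<in>UNIV. G ((\<theta>(w := None))(z \<mapsto> y)))"
    by (simp add: sum.distrib sum_distrib_left sum.swap[of _ UNIV])
  also have "(\<Sum>z\<in>dom \<theta>. \<Sum>w\<in>dom \<theta> - {z}. \<Sum>y\<in>UNIV. G ((\<theta>(w := None))(z \<mapsto> y)))
      = (\<Sum>w\<in>dom \<theta>. \<Sum>z\<in>dom \<theta> - {w}. \<Sum>y\<in>UNIV. G ((\<theta>(w := None))(z \<mapsto> y)))"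
    by (rule sum_swap_off_diagonal[OF fin])
  also have "\<dots> = Dstar n (Suc j) (resample_sum G) \<theta>"
    by (simp add: Dstar_Suc_eq[OF \<theta>] resample_sum_def)
  finally show ?thesis
    by (simp only: Dstar_Suc_eq[OF \<theta>])
qed

definition resample_eigen :: "nat \<Rightarrow> nat \<Rightarrow> nat \<Rightarrow> ((nat \<rightharpoonup> 'y::finite) \<Rightarrow> complex) \<Rightarrow> bool" where
  "resample_eigen n j c G \<longleftrightarrow>
     (\<forall>\<psi>\<in>Theta n j. resample_sum G \<psi> = of_nat (c * card (UNIV :: 'y set)) * G \<psi>)"

lemma Dstar_cong: "(\<And>\<phi>. \<phi> \<in> Theta n (k - 1) \<Longrightarrow> G \<phi> = H \<phi>) \<Longrightarrow> Dstar n k G = Dstar n k H"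
  by (auto simp: Dstar_def fun_eq_iff intro!: sum.cong)

lemma Dstar_scale: "Dstar n k (\<lambda>\<phi>. a * G \<phi>) \<theta> = a * Dstar n k G \<theta>"
  by (simp add: Dstar_def sum_distrib_left)

lemma resample_eigen_Dstar:
  fixes G :: "(nat \<rightharpoonup> 'y::finite) \<Rightarrow> complex"
  assumes "resample_eigen n j c G"
  shows "resample_eigen n (Suc j) (Suc c) (Dstar n (Suc j) G)"
  unfolding resample_eigen_def
proof
  fix \<theta> :: "nat \<rightharpoonup> 'y" assume \<theta>: "\<theta> \<in> Theta n (Suc j)"
  let ?N = "card (UNIV :: 'y set)"
  have "Dstar n (Suc j) (resample_sum G) = Dstar n (Suc j) (\<lambda>\<phi>. of_nat (c * ?N) * G \<phi>)"
    using assms by (intro Dstar_cong) (simp add: resample_eigen_def)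
  then have "resample_sum (Dstar n (Suc j) G) \<theta>
      = of_nat ?N * Dstar n (Suc j) G \<theta> + of_nat (c * ?N) * Dstar n (Suc j) G \<theta>"
    by (simp only: resample_sum_Dstar[OF \<theta>] Dstar_scale)
  then show "resample_sum (Dstar n (Suc j) G) \<theta> = of_nat (Suc c * ?N) * Dstar n (Suc j) G \<theta>"
    by (simp add: algebra_simps)
qed

lemma Dop_Dstar_eigen:
  fixes G :: "(nat \<rightharpoonup> 'y::finite) \<Rightarrow> complex" and r :: real
  assumes "resample_eigen n j c G"
    and "\<forall>\<psi>\<in>Theta n j. Dstar n j (Dop n j G) \<psi> = of_real (r * card (UNIV :: 'y set)) * G \<psi>"
    and \<psi>: "\<psi> \<in> Theta n j"
  shows "Dop n (Suc j) (Dstar n (Suc j) G) \<psi>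
       = of_real ((r + real n - real j - real c) * card (UNIV :: 'y set)) * G \<psi>"
proof -
  let ?N = "card (UNIV :: 'y set)"
  have "Dop n (Suc j) (Dstar n (Suc j) G) \<psi> + of_nat (c * ?N) * G \<psi>
      = of_real (r * ?N) * G \<psi> + of_nat ((n - j) * ?N) * G \<psi>"
    using Dop_Dstar_commute[OF \<psi>, of G] assms by (simp add: resample_eigen_def)
  then have "Dop n (Suc j) (Dstar n (Suc j) G) \<psi>
      = of_real (r * ?N) * G \<psi> + of_nat ((n - j) * ?N) * G \<psi> - of_nat (c * ?N) * G \<psi>"
    by (simp add: eq_diff_eq)
  also have "\<dots> = (of_real (r * ?N) + of_nat ((n - j) * ?N) - of_nat (c * ?N)) * G \<psi>"
    by (simp add: algebra_simps)
  also have "of_real (r * ?N) + of_nat ((n - j) * ?N) - of_nat (c * ?N)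
      = complex_of_real ((r + real n - real j - real c) * ?N)"
    using Theta_le[OF \<psi>] by (simp add: of_nat_diff algebra_simps)
  finally show ?thesis .
qed

definition iter_eigenvalue :: "nat \<Rightarrow> nat \<Rightarrow> nat \<Rightarrow> nat \<Rightarrow> real" where
  "iter_eigenvalue n k c d = real d * (real n - real k - real c - real d + 1)"

lemma iter_eigenvalue_Suc:
  "iter_eigenvalue n k c d + real n - real (k + d) - real (c + d) = iter_eigenvalue n k c (Suc d)"
  by (simp add: iter_eigenvalue_def algebra_simps)

lemma DstarIter_eigen:
  fixes F :: "(nat \<rightharpoonup> 'y::finite) \<Rightarrow> complex"
  assumes "resample_eigen n k c F" and "Dop n k F = (\<lambda>_. 0)"
  shows "resample_eigen n (k + d) (c + d) (DstarIter n k d F) \<and>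
    (\<forall>\<psi>\<in>Theta n (k + d). Dstar n (k + d) (Dop n (k + d) (DstarIter n k d F)) \<psi>
       = of_real (iter_eigenvalue n k c d * card (UNIV :: 'y set)) * DstarIter n k d F \<psi>)"
proof (induction d)
  case 0
  with assms show ?case by (simp add: Dstar_def iter_eigenvalue_def)
next
  case (Suc d)
  let ?G = "DstarIter n k d F" and ?\<mu> = "iter_eigenvalue n k c (Suc d) * card (UNIV :: 'y set)"
  from Suc.IH have eigen: "resample_eigen n (k + d) (c + d) ?G"
    and DstarDop: "\<forall>\<psi>\<in>Theta n (k + d). Dstar n (k + d) (Dop n (k + d) ?G) \<psi>
       = of_real (iter_eigenvalue n k c d * card (UNIV :: 'y set)) * ?G \<psi>"
    by blast+
  have "Dop n (Suc (k + d)) (Dstar n (Suc (k + d)) ?G) \<psi> = of_real ?\<mu> * ?G \<psi>"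
    if "\<psi> \<in> Theta n (k + d)" for \<psi>
    using Dop_Dstar_eigen[OF eigen DstarDop that] unfolding iter_eigenvalue_Suc .
  then have "Dstar n (Suc (k + d)) (Dop n (Suc (k + d)) (Dstar n (Suc (k + d)) ?G))
      = Dstar n (Suc (k + d)) (\<lambda>\<psi>. of_real ?\<mu> * ?G \<psi>)"
    by (intro Dstar_cong) simp
  then show ?case
    using resample_eigen_Dstar[OF eigen] by (simp add: Dstar_scale)
qed

lemma Dop_Dstar_DstarIter:
  fixes F :: "(nat \<rightharpoonup> 'y::finite) \<Rightarrow> complex"
  assumes "resample_eigen n k c F" and "Dop n k F = (\<lambda>_. 0)" and "\<psi> \<in> Theta n (k + d)"
  shows "Dop n (Suc (k + d)) (Dstar n (Suc (k + d)) (DstarIter n k d F)) \<psi>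
       = of_real (iter_eigenvalue n k c (Suc d) * card (UNIV :: 'y set)) * DstarIter n k d F \<psi>"
proof -
  from DstarIter_eigen[OF assms(1,2), of d]
  have "resample_eigen n (k + d) (c + d) (DstarIter n k d F)"
    and "\<forall>\<psi>\<in>Theta n (k + d). Dstar n (k + d) (Dop n (k + d) (DstarIter n k d F)) \<psi>
       = of_real (iter_eigenvalue n k c d * card (UNIV :: 'y set)) * DstarIter n k d F \<psi>"
    by blast+
  from Dop_Dstar_eigen[OF this assms(3)] show ?thesis
    unfolding iter_eigenvalue_Suc .
qed

section \<open>Norms of the iterates\<close>

lemma Dstar_adjoint:
  "(\<Sum>\<theta>\<in>Theta n (Suc j). Dstar n (Suc j) G \<theta> * cnj (H \<theta>))
     = (\<Sum>\<phi>\<in>Theta n j. G \<phi> * cnj (Dop n (Suc j) H \<phi>))"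
proof -
  have "(\<Sum>\<theta>\<in>Theta n (Suc j). Dstar n (Suc j) G \<theta> * cnj (H \<theta>))
     = (\<Sum>\<theta>\<in>Theta n (Suc j). \<Sum>\<phi>\<in>Theta n j. if \<phi> \<subseteq>\<^sub>m \<theta> then G \<phi> * cnj (H \<theta>) else 0)"
    by (simp add: Dstar_def sum.inter_filter[OF finite_Theta] sum_distrib_right) (intro sum.cong refl; simp)
  also have "\<dots> = (\<Sum>\<phi>\<in>Theta n j. \<Sum>\<theta>\<in>Theta n (Suc j). if \<phi> \<subseteq>\<^sub>m \<theta> then G \<phi> * cnj (H \<theta>) else 0)"
    by (rule sum.swap)
  also have "\<dots> = (\<Sum>\<phi>\<in>Theta n j. G \<phi> * cnj (Dop n (Suc j) H \<phi>))"
    by (simp add: Dop_def sum.inter_filter[OF finite_Theta] sum_distrib_left cnj_sum) (intro sum.cong refl; simp)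
  finally show ?thesis .
qed

lemma normsq_eq_sum_cnj: "complex_of_real (normsq n j G) = (\<Sum>\<theta>\<in>Theta n j. G \<theta> * cnj (G \<theta>))"
  unfolding normsq_def of_real_sum by (intro sum.cong refl complex_norm_square)

lemma normsq_Dstar:
  assumes "\<forall>\<psi>\<in>Theta n j. Dop n (Suc j) (Dstar n (Suc j) G) \<psi> = of_real r * G \<psi>"
  shows "normsq n (Suc j) (Dstar n (Suc j) G) = r * normsq n j G"
proof -
  have "complex_of_real (normsq n (Suc j) (Dstar n (Suc j) G))
     = (\<Sum>\<phi>\<in>Theta n j. G \<phi> * cnj (Dop n (Suc j) (Dstar n (Suc j) G) \<phi>))"
    unfolding normsq_eq_sum_cnj by (rule Dstar_adjoint)
  also have "\<dots> = complex_of_real (r * normsq n j G)"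
    using assms by (simp add: normsq_eq_sum_cnj sum_distrib_left algebra_simps)
  finally show ?thesis
    using of_real_eq_iff by blast
qed

lemma normsq_DstarIter:
  fixes F :: "(nat \<rightharpoonup> 'y::finite) \<Rightarrow> complex"
  assumes "resample_eigen n k c F" and "Dop n k F = (\<lambda>_. 0)"
  shows "normsq n (k + d) (DstarIter n k d F) =
     (\<Prod>i<d. iter_eigenvalue n k c (Suc i) * card (UNIV :: 'y set)) * normsq n k F"
proof (induction d)
  case 0
  then show ?case by simp
next
  case (Suc d)
  have "normsq n (Suc (k + d)) (Dstar n (Suc (k + d)) (DstarIter n k d F))
      = iter_eigenvalue n k c (Suc d) * card (UNIV :: 'y set) * normsq n (k + d) (DstarIter n k d F)"
    using Dop_Dstar_DstarIter[OF assms] by (intro normsq_Dstar) blast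
  with Suc.IH show ?case
    by (simp add: algebra_simps)
qed

lemma prod_Suc_mult_diff_fact:
  "D \<le> M \<Longrightarrow> (\<Prod>i<D. real (Suc i) * (real M - real i)) * fact (M - D) = fact M * (fact D :: real)"
proof (induction D)
  case 0
  then show ?case by simp
next
  case (Suc D)
  have "M - D = Suc (M - Suc D)"
    using Suc.prems by simp
  then have fact_eq: "(fact (M - D) :: real) = real (M - D) * fact (M - Suc D)"
    by simp
  have "(\<Prod>i<Suc D. real (Suc i) * (real M - real i)) * fact (M - Suc D)
     = (\<Prod>i<D. real (Suc i) * (real M - real i)) * (real (Suc D) * real (M - D)) * fact (M - Suc D)"
    using Suc.prems by (simp add: of_nat_diff)
  also have "\<dots> = (\<Prod>i<D. real (Suc i) * (real M - real i)) * fact (M - D) * real (Suc D)"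
    unfolding fact_eq by (simp add: algebra_simps)
  also have "\<dots> = fact M * fact (Suc D)"
    using Suc by (simp add: algebra_simps)
  finally show ?case .
qed

lemma prod_iter_eigenvalue:
  assumes "real n - real k - real c = real M" and "D \<le> M"
  shows "(\<Prod>i<D. iter_eigenvalue n k c (Suc i) * x)
       = real (fact M) * real (fact D) / real (fact (M - D)) * x ^ D"
proof -
  have "iter_eigenvalue n k c (Suc i) = real (Suc i) * (real M - real i)" for i
    using assms(1) by (simp add: iter_eigenvalue_def algebra_simps)
  then have "(\<Prod>i<D. iter_eigenvalue n k c (Suc i) * x) = (\<Prod>i<D. real (Suc i) * (real M - real i)) * x ^ D"
    by (simp add: prod.distrib)
  also have "(\<Prod>i<D. real (Suc i) * (real M - real i)) = real (fact M) * real (fact D) / real (fact (M - D))"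
    using prod_Suc_mult_diff_fact[OF assms(2)] by (simp add: field_simps)
  finally show ?thesis .
qed

definition Dop_kernel :: "nat \<Rightarrow> nat \<Rightarrow> nat \<Rightarrow> ((nat \<rightharpoonup> 'y::finite) \<Rightarrow> complex) set" where
  "Dop_kernel n k c =
     {F. resample_eigen n k c F \<and> Dop n k F = (\<lambda>_. 0) \<and> (\<forall>\<theta>. \<theta> \<notin> Theta n k \<longrightarrow> F \<theta> = 0)}"

lemma normsq_DstarIter_closed_form:
  fixes F :: "(nat \<rightharpoonup> 'y::finite) \<Rightarrow> complex"
  assumes "F \<in> Dop_kernel n k c" and "k + c + D \<le> n"
  shows "normsq n (k + D) (DstarIter n k D F)
       = real (fact (n - k - c)) * real (fact D) / real (fact (n - k - c - D))
         * real (card (UNIV :: 'y set)) ^ D * normsq n k F"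
proof -
  from assms(1) have "resample_eigen n k c F" and "Dop n k F = (\<lambda>_. 0)"
    by (simp_all add: Dop_kernel_def)
  then have "normsq n (k + D) (DstarIter n k D F)
      = (\<Prod>i<D. iter_eigenvalue n k c (Suc i) * card (UNIV :: 'y set)) * normsq n k F"
    by (rule normsq_DstarIter)
  also have "(\<Prod>i<D. iter_eigenvalue n k c (Suc i) * card (UNIV :: 'y set))
      = real (fact (n - k - c)) * real (fact D) / real (fact (n - k - c - D)) * real (card (UNIV :: 'y set)) ^ D"
    using assms(2) by (intro prod_iter_eigenvalue) (simp_all add: of_nat_diff)
  finally show ?thesis .
qed

lemma Dop_diff: "Dop n k (\<lambda>\<theta>. F1 \<theta> - F2 \<theta>) = (\<lambda>\<phi>. Dop n k F1 \<phi> - Dop n k F2 \<phi>)"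
  by (auto simp: Dop_def sum_subtractf)

lemma Dstar_diff: "Dstar n k (\<lambda>\<theta>. F1 \<theta> - F2 \<theta>) = (\<lambda>\<phi>. Dstar n k F1 \<phi> - Dstar n k F2 \<phi>)"
  by (auto simp: Dstar_def sum_subtractf)

lemma DstarIter_diff:
  "DstarIter n k d (\<lambda>\<theta>. F1 \<theta> - F2 \<theta>) = (\<lambda>\<phi>. DstarIter n k d F1 \<phi> - DstarIter n k d F2 \<phi>)"
  by (induction d) (simp_all add: Dstar_diff)

lemma Dop_kernel_diff:
  "F1 \<in> Dop_kernel n k c \<Longrightarrow> F2 \<in> Dop_kernel n k c \<Longrightarrow> (\<lambda>\<theta>. F1 \<theta> - F2 \<theta>) \<in> Dop_kernel n k c"
  unfolding Dop_kernel_def resample_eigen_def resample_sum_def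
  by (simp add: Dop_diff sum_subtractf algebra_simps)

lemma normsq_eq_0_iff:
  "normsq n k F = 0 \<longleftrightarrow> (\<forall>\<theta>\<in>Theta n k. F \<theta> = 0)"
  unfolding normsq_def by (simp add: sum_nonneg_eq_0_iff finite_Theta)

lemma inj_on_DstarIter:
  assumes "k + c + D \<le> n"
  shows "inj_on (DstarIter n k D) (Dop_kernel n k c :: ((nat \<rightharpoonup> 'y::finite) \<Rightarrow> complex) set)"
proof (rule inj_onI)
  fix F1 F2 :: "(nat \<rightharpoonup> 'y) \<Rightarrow> complex"
  assume F1: "F1 \<in> Dop_kernel n k c" and F2: "F2 \<in> Dop_kernel n k c"
    and eq: "DstarIter n k D F1 = DstarIter n k D F2"
  define F where "F = (\<lambda>\<theta>. F1 \<theta> - F2 \<theta>)"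
  have "normsq n (k + D) (DstarIter n k D F) = 0"
    unfolding F_def DstarIter_diff eq by (simp add: normsq_def)
  moreover have "normsq n (k + D) (DstarIter n k D F)
      = real (fact (n - k - c)) * real (fact D) / real (fact (n - k - c - D))
        * real (card (UNIV :: 'y set)) ^ D * normsq n k F"
    unfolding F_def by (rule normsq_DstarIter_closed_form[OF Dop_kernel_diff[OF F1 F2] assms])
  ultimately have "\<forall>\<theta>\<in>Theta n k. F \<theta> = 0"
    by (simp add: normsq_eq_0_iff)
  then have "F1 \<theta> = F2 \<theta>" for \<theta>
    using F1 F2 by (cases "\<theta> \<in> Theta n k") (auto simp: F_def Dop_kernel_def)
  then show "F1 = F2" ..
qed

section \<open>Eigenspaces of Q and the spaces P\<close>

lemma stochastic_sym_irredD:
  assumes "stochastic_sym_irred q"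
  shows "q y y' \<ge> 0" and "(\<Sum>y'\<in>UNIV. q y y') = 1"
    and "(y, y') \<in> {(u, v). q u v > 0}\<^sup>*" and "q y y' = q y' y"
  using assms unfolding stochastic_sym_irred_def by auto

lemma stochastic_harmonic_const:
  fixes g :: "'y::finite \<Rightarrow> real" and q :: "'y \<Rightarrow> 'y \<Rightarrow> real"
  assumes nonneg: "\<And>y y'. q y y' \<ge> 0" and row_sum: "\<And>y. (\<Sum>y'\<in>UNIV. q y y') = 1"
    and irreducible: "\<And>y y'. (y, y') \<in> {(u, v). q u v > 0}\<^sup>*"
    and harmonic: "\<And>y. g y = (\<Sum>y'\<in>UNIV. q y y' * g y')"
  shows "g y = g y'"
proof -
  define M where "M = Max (range g)"
  have le_M: "g x \<le> M" for x
    unfolding M_def by simp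
  have "M \<in> range g"
    unfolding M_def by (rule Max_in) auto
  then obtain y0 where y0: "g y0 = M"
    by auto
  have max_step: "g b = M" if "g a = M" "q a b > 0" for a b
  proof -
    have "(\<Sum>y'\<in>UNIV. q a y' * (M - g y')) = M * (\<Sum>y'\<in>UNIV. q a y') - (\<Sum>y'\<in>UNIV. q a y' * g y')"
      by (simp add: algebra_simps sum_subtractf sum_distrib_left)
    also have "\<dots> = 0"
      using row_sum harmonic[of a] that(1) by simp
    finally have "q a b * (M - g b) = 0"
      using nonneg le_M sum_nonneg_eq_0_iff[of UNIV "\<lambda>y'. q a y' * (M - g y')"] by simp
    with that(2) show ?thesis by simp
  qed
  have "g z = M" for z
    using irreducible[of y0 z] by (induction rule: rtrancl_induct) (use y0 max_step in auto)
  then show ?thesis by simp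
qed

lemma W0_constant:
  fixes f :: "'y::finite \<Rightarrow> complex"
  assumes "stochastic_sym_irred q" and "eigen_enum q m lam" and f: "f \<in> W q lam 0"
  shows "f y = f y'"
proof -
  have f_eq: "f y = (\<Sum>y'\<in>UNIV. complex_of_real (q y y') * f y')" for y
    using f assms(2) unfolding W_def Qop_def eigen_enum_def by (simp add: fun_eq_iff)
  have Re_harmonic: "Re (f y) = (\<Sum>y'\<in>UNIV. q y y' * Re (f y'))" for y
    by (subst f_eq) (simp add: Re_sum)
  have Im_harmonic: "Im (f y) = (\<Sum>y'\<in>UNIV. q y y' * Im (f y'))" for y
    by (subst f_eq) (simp add: Im_sum)
  note q = stochastic_sym_irredD(1-3)[OF assms(1)]
  have "Re (f y) = Re (f y')" and "Im (f y) = Im (f y')"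
    using stochastic_harmonic_const[OF q Re_harmonic] stochastic_harmonic_const[OF q Im_harmonic] .
  then show ?thesis by (simp add: complex_eq_iff)
qed

lemma sum_UNIV_W:
  fixes f :: "'y::finite \<Rightarrow> complex"
  assumes sq: "stochastic_sym_irred q" and ee: "eigen_enum q m lam"
    and i: "i \<le> m" and f: "f \<in> W q lam i"
  shows "(\<Sum>y\<in>UNIV. f y) = (if i = 0 then of_nat (card (UNIV :: 'y set)) * f y0 else 0)"
proof (cases "i = 0")
  case True
  with f have f0: "f \<in> W q lam 0"
    by simp
  have "(\<Sum>y\<in>UNIV. f y) = (\<Sum>y\<in>(UNIV :: 'y set). f y0)"
    by (rule sum.cong[OF refl W0_constant[OF sq ee f0]])
  with True show ?thesis by simp
next
  case False
  have "lam i \<noteq> lam 0"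
    using ee False i unfolding eigen_enum_def inj_on_def by blast
  then have lam_i: "lam i \<noteq> 1"
    using ee by (simp add: eigen_enum_def)
  have col_sum: "(\<Sum>y\<in>UNIV. q y y') = 1" for y'
  proof -
    have "(\<Sum>y\<in>UNIV. q y y') = (\<Sum>y\<in>UNIV. q y' y)"
      by (rule sum.cong[OF refl stochastic_sym_irredD(4)[OF sq]])
    with stochastic_sym_irredD(2)[OF sq, of y'] show ?thesis
      by simp
  qed
  have "(\<Sum>y\<in>UNIV. f y) = (\<Sum>y'\<in>UNIV. complex_of_real (\<Sum>y\<in>UNIV. q y y') * f y')"
    by (simp add: col_sum)
  also have "\<dots> = (\<Sum>y\<in>UNIV. Qop q f y)"
    unfolding Qop_def by (subst sum.swap) (simp add: sum_distrib_right)
  also have "\<dots> = complex_of_real (lam i) * (\<Sum>y\<in>UNIV. f y)"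
    using f unfolding W_def by (simp add: sum_distrib_left)
  finally have "(complex_of_real (lam i) - 1) * (\<Sum>y\<in>UNIV. f y) = 0"
    by (simp add: algebra_simps)
  moreover have "complex_of_real (lam i) - 1 \<noteq> 0"
    using lam_i by simp
  ultimately show ?thesis
    using False by simp
qed

lemma sum_UNIV_prod_update:
  fixes Fj :: "nat \<Rightarrow> 'y::finite \<Rightarrow> complex"
  assumes "finite A" and "z \<in> A"
  shows "(\<Sum>y\<in>UNIV. \<Prod>j\<in>A. Fj j (the ((\<psi>(z \<mapsto> y)) j)))
       = (\<Sum>y\<in>UNIV. Fj z y) * (\<Prod>j\<in>A - {z}. Fj j (the (\<psi> j)))"
proof -
  have "(\<Prod>j\<in>A - {z}. Fj j (the ((\<psi>(z \<mapsto> y)) j))) = (\<Prod>j\<in>A - {z}. Fj j (the (\<psi> j)))" for y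
    by (intro prod.cong) auto
  with assms show ?thesis
    by (simp add: prod.remove sum_distrib_right)
qed

text \<open>On a fundamental function of type c every factor from W(0) is constant and every other
  factor sums to zero over Y, so resample_sum acts on it as multiplication by c(0)|Y|.\<close>

lemma fundamental_resample_eigen:
  fixes G :: "(nat \<rightharpoonup> 'y::finite) \<Rightarrow> complex"
  assumes sq: "stochastic_sym_irred q" and ee: "eigen_enum q m lam"
    and "fundamental q m lam c A G"
  shows "resample_eigen n k (c 0) G"
proof -
  let ?N = "card (UNIV :: 'y set)"
  obtain Fj ii where W: "\<forall>j\<in>A. ii j \<le> m \<and> Fj j \<in> W q lam (ii j)"
    and card_ii: "\<forall>i\<le>m. card {j\<in>A. ii j = i} = c i"
    and G: "G = (\<lambda>\<theta>. if dom \<theta> = A then (\<Prod>j\<in>A. Fj j (the (\<theta> j))) else 0)"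
    using assms(3) unfolding fundamental_def by blast
  show ?thesis
    unfolding resample_eigen_def resample_sum_def
  proof
    fix \<psi> :: "nat \<rightharpoonup> 'y" assume \<psi>: "\<psi> \<in> Theta n k"
    show "(\<Sum>z\<in>dom \<psi>. \<Sum>y\<in>UNIV. G (\<psi>(z \<mapsto> y))) = of_nat (c 0 * ?N) * G \<psi>"
    proof (cases "dom \<psi> = A")
      case True
      have finA: "finite A"
        using finite_dom_Theta[OF \<psi>] True by simp
      have coordinate_sum: "(\<Sum>y\<in>UNIV. G (\<psi>(z \<mapsto> y))) = (if ii z = 0 then of_nat ?N * G \<psi> else 0)"
        if z: "z \<in> A" for z
      proof -
        define P where "P = (\<Prod>j\<in>A - {z}. Fj j (the (\<psi> j)))"
        have "(\<Sum>y\<in>UNIV. G (\<psi>(z \<mapsto> y))) = (\<Sum>y\<in>UNIV. \<Prod>j\<in>A. Fj j (the ((\<psi>(z \<mapsto> y)) j)))"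
          using True z by (simp add: G insert_absorb)
        also have "\<dots> = (\<Sum>y\<in>UNIV. Fj z y) * P"
          unfolding P_def by (rule sum_UNIV_prod_update[OF finA z])
        finally have "(\<Sum>y\<in>UNIV. G (\<psi>(z \<mapsto> y))) = (\<Sum>y\<in>UNIV. Fj z y) * P" .
        moreover have "G \<psi> = Fj z (the (\<psi> z)) * P"
          using True finA z by (simp add: G P_def prod.remove)
        moreover have "ii z \<le> m" "Fj z \<in> W q lam (ii z)"
          using W z by auto
        ultimately show ?thesis
          by (simp add: sum_UNIV_W[OF sq ee, of "ii z" "Fj z" "the (\<psi> z)"])
      qed
      have "(\<Sum>z\<in>dom \<psi>. \<Sum>y\<in>UNIV. G (\<psi>(z \<mapsto> y))) = (\<Sum>z\<in>A. if ii z = 0 then of_nat ?N * G \<psi> else 0)"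
        using True coordinate_sum by simp
      also have "\<dots> = (\<Sum>z\<in>{z\<in>A. ii z = 0}. of_nat ?N * G \<psi>)"
        by (rule sum.inter_filter[symmetric, OF finA])
      also have "\<dots> = of_nat (c 0 * ?N) * G \<psi>"
        using card_ii by simp
      finally show ?thesis .
    next
      case False
      then have "G (\<psi>(z \<mapsto> y)) = 0" if "z \<in> dom \<psi>" for z y
        using that by (simp add: G insert_absorb)
      with False show ?thesis
        by (simp add: G)
    qed
  qed
qed

lemma resample_eigen_lincomb:
  fixes T :: "((nat \<rightharpoonup> 'y::finite) \<Rightarrow> complex) set"
  assumes "finite T" and "\<forall>G\<in>T. resample_eigen n k c G"
  shows "resample_eigen n k c (\<lambda>\<theta>. \<Sum>G\<in>T. u G * G \<theta>)"
  unfolding resample_eigen_def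
proof
  fix \<psi> :: "nat \<rightharpoonup> 'y" assume \<psi>: "\<psi> \<in> Theta n k"
  have "resample_sum (\<lambda>\<theta>. \<Sum>G\<in>T. u G * G \<theta>) \<psi> = (\<Sum>G\<in>T. u G * resample_sum G \<psi>)"
    unfolding resample_sum_def by (simp add: sum_distrib_left sum.swap[of _ T])
  also have "\<dots> = of_nat (c * card (UNIV :: 'y set)) * (\<Sum>G\<in>T. u G * G \<psi>)"
    using assms(2) \<psi> by (simp add: resample_eigen_def sum_distrib_left algebra_simps)
  finally show "resample_sum (\<lambda>\<theta>. \<Sum>G\<in>T. u G * G \<theta>) \<psi>
      = of_nat (c * card (UNIV :: 'y set)) * (\<Sum>G\<in>T. u G * G \<psi>)" .
qed

lemma PkcE:
  assumes "F \<in> Pkc q m lam n k c"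
  obtains T u where "finite T" and "F = (\<lambda>\<theta>. \<Sum>G\<in>T. u G * G \<theta>)"
    and "\<And>G. G \<in> T \<Longrightarrow> \<exists>A. A \<subseteq> {1..n} \<and> card A = k \<and> fundamental q m lam c A G"
  using assms unfolding Pkc_def cspan_def by blast

lemma Pkc_resample_eigen:
  assumes "stochastic_sym_irred q" and "eigen_enum q m lam" and "F \<in> Pkc q m lam n k c"
  shows "resample_eigen n k (c 0) F"
  using assms(3)
proof (rule PkcE)
  fix T u assume T: "finite T" and F: "F = (\<lambda>\<theta>. \<Sum>G\<in>T. u G * G \<theta>)"
    and fund: "\<And>G. G \<in> T \<Longrightarrow> \<exists>A. A \<subseteq> {1..n} \<and> card A = k \<and> fundamental q m lam c A G"
  have "\<forall>G\<in>T. resample_eigen n k (c 0) G"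
    using fund fundamental_resample_eigen[OF assms(1,2)] by blast
  then show ?thesis
    unfolding F by (rule resample_eigen_lincomb[OF T])
qed

lemma Pkc_vanishes_outside_Theta:
  assumes "F \<in> Pkc q m lam n k c" and "\<theta> \<notin> Theta n k"
  shows "F \<theta> = 0"
  using assms(1)
proof (rule PkcE)
  fix T u assume F: "F = (\<lambda>\<theta>. \<Sum>G\<in>T. u G * G \<theta>)"
    and fund: "\<And>G. G \<in> T \<Longrightarrow> \<exists>A. A \<subseteq> {1..n} \<and> card A = k \<and> fundamental q m lam c A G"
  have "G \<theta> = 0" if "G \<in> T" for G
  proof -
    from fund[OF that] obtain A where A: "A \<subseteq> {1..n}" "card A = k" "fundamental q m lam c A G"
      by blast
    then obtain Fj where G: "G = (\<lambda>\<theta>. if dom \<theta> = A then (\<Prod>j\<in>A. Fj j (the (\<theta> j))) else 0)"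
      unfolding fundamental_def by blast
    have "dom \<theta> \<noteq> A"
      using assms(2) A by (auto simp: Theta_def)
    then show ?thesis
      by (simp add: G)
  qed
  with F show ?thesis
    by (simp add: sum.neutral)
qed

lemma Pspace_base_subset_Dop_kernel:
  assumes "stochastic_sym_irred q" and "eigen_enum q m lam"
  shows "Pspace q m lam n k c k \<subseteq> Dop_kernel n k (c 0)"
proof
  fix F assume "F \<in> Pspace q m lam n k c k"
  then have F: "F \<in> Pkc q m lam n k c" "Dop n k F = (\<lambda>_. 0)"
    by (simp_all add: Pspace_def)
  then show "F \<in> Dop_kernel n k (c 0)"
    using Pkc_resample_eigen[OF assms F(1)] Pkc_vanishes_outside_Theta[OF F(1)]
    by (simp add: Dop_kernel_def)
qed

lemma PP_eq_image_DstarIter: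
  "PP q m lam n d c k = DstarIter n k d ` PP q m lam n 0 (type_shift d c) k"
proof (induction d arbitrary: c)
  case 0
  then show ?case by (simp add: type_shift_def)
next
  case (Suc d)
  have "type_shift d (type_shift 1 c) = type_shift (Suc d) c"
    by (simp add: type_shift_def)
  with Suc.IH[of "type_shift 1 c"] show ?case
    by (simp add: image_image)
qed

theorem proposition7p11:
  fixes q :: "'y::finite \<Rightarrow> 'y \<Rightarrow> real"
    and m n h k :: nat and lam :: "nat \<Rightarrow> real" and a :: "nat \<Rightarrow> nat"
  assumes "stochastic_sym_irred q"
    and "eigen_enum q m lam"
    and "type_size m a = h"
    and "type_ell m a \<le> k" and "2 * k \<le> n + type_ell m a"
    and "k \<le> h" and "h + k \<le> n + type_ell m a"
  shows "(\<forall>F\<in>Pspace q m lam n k (type_shift (h - k) a) k.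
            normsq n h (DstarIter n k (h - k) F) =
              real (fact (n + type_ell m a - 2 * k)) * real (fact (h - k))
                / real (fact (n + type_ell m a - k - h))
                * real (card (UNIV :: 'y set)) ^ (h - k) * normsq n k F)
       \<and> bij_betw (DstarIter n k (h - k))
            (Pspace q m lam n k (type_shift (h - k) a) k) (Pspace q m lam n h a k)"
proof -
  let ?l = "type_ell m a" and ?c = "type_shift (h - k) a"
  have "{..m} = insert 0 {1..m}"
    by auto
  then have "type_size m a = a 0 + ?l"
    unfolding type_size_def type_ell_def by simp
  then have c0: "?c 0 = k - ?l"
    using assms(3,4,6) by (simp add: type_shift_def)
  have bound: "k + ?c 0 + (h - k) \<le> n"
    using c0 assms(4-7) by simp
  note kernel = Pspace_base_subset_Dop_kernel[OF assms(1,2), of n k ?c]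
  have arith: "n - k - ?c 0 = n + ?l - 2 * k" "n + ?l - 2 * k - (h - k) = n + ?l - k - h" "k + (h - k) = h"
    using c0 assms(4-7) by auto
  have "normsq n h (DstarIter n k (h - k) F) =
      real (fact (n + ?l - 2 * k)) * real (fact (h - k)) / real (fact (n + ?l - k - h))
      * real (card (UNIV :: 'y set)) ^ (h - k) * normsq n k F"
    if "F \<in> Pspace q m lam n k ?c k" for F
    using normsq_DstarIter_closed_form[OF subsetD[OF kernel that] bound] unfolding arith .
  moreover have "Pspace q m lam n h a k = DstarIter n k (h - k) ` Pspace q m lam n k ?c k"
    unfolding Pspace_def by (subst PP_eq_image_DstarIter) simp
  ultimately show ?thesis
    using inj_on_subset[OF inj_on_DstarIter[OF bound] kernel] by (simp add: bij_betw_def)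
qed

end
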